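(* For every integer $k \geq 2$ and every $\varepsilon > 0$ there exist $\delta > 0$ and $n_0$ such that the following holds for every $n \geq n_0$. Let $H$ be an $n$-vertex $k$-graph with $\delta_1(H) \geq (2^{-k+1} + \varepsilon)\binom{n-1}{k-1}$. Then for every pair of distinct vertices $x_1, x_2 \in V(H)$, there are at least $\delta n^{2k-3}$ distinct $(x_1, x_2)$-paths of length two in $H$.
   Context: $\delta_1(H)$ is the minimum number of edges containing a vertex. For $x_1, x_2 \in V(H)$, an $(x_1,x_2)$-path is a subgraph $P' \subseteq H$ which equals the $k$-expansion $P^{(k)}$ of a graph path $P$ with endpoints $x_1, x_2$ (the $k$-expansion replaces each edge $uv$ by a $k$-edge consisting of $u$, $v$ and $k-2$ new vertices belonging to no other edge). The length of the path is its number of edges; thus an $(x_1,x_2)$-path of length two consists of two edges $e \ni x_1$, $f \ni x_2$ sharing exactly one vertex, which differs from $x_1, x_2$. *)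

theory Defs
  imports Complex_Main
begin

definition kgraph :: "nat \<Rightarrow> 'a set \<Rightarrow> 'a set set \<Rightarrow> bool" where
  "kgraph k V E \<longleftrightarrow> finite V \<and> (\<forall>e\<in>E. e \<subseteq> V \<and> card e = k)"

definition vdeg :: "'a set set \<Rightarrow> 'a \<Rightarrow> nat" where
  "vdeg E x = card {e\<in>E. x \<in> e}"

definition min_vdeg :: "'a set \<Rightarrow> 'a set set \<Rightarrow> nat" where
  "min_vdeg V E = Min (vdeg E ` V)"

text \<open>The (x1,x2)-paths of length two, each represented by its edge set {e,f}:
e contains x1, f contains x2, and e and f share exactly one vertex v,
which differs from x1 and x2 (this is exactly the 2-edge k-expansion of the
graph path x1 v x2).\<close>
definition paths2 :: "'a set set \<Rightarrow> 'a \<Rightarrow> 'a \<Rightarrow> 'a set set set" where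
  "paths2 E x1 x2 = {{e, f} | e f. e \<in> E \<and> f \<in> E \<and> x1 \<in> e \<and> x2 \<in> f \<and>
      (\<exists>v. e \<inter> f = {v} \<and> v \<noteq> x1 \<and> v \<noteq> x2)}"

end

theory Submission
  imports Defs
begin

text \<open>Write k = r + 1 and call a vertex v heavy for x against y if at least eta n^(r-1)
edges contain x and v but not y. At most n^(r-1) edges contain both x and y, so by the degree
condition at least (2^(-r) + eps) C(n-1,r) - n^(r-1) edges contain x and avoid y. Of these,
the ones whose other r vertices are all heavy number at most C(p,r) <= p^r/r!, where p is the
number of heavy vertices, and the others at most eta n^r. Hence p^r >= (2^(-r) + eps/2) n^r,
which exceeds ((1/2 + gamma) n)^r: more than half of the vertices are heavy for x1, and
likewise for x2. Each of the more than 2 gamma n vertices v heavy for both yields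
eta^2 n^(2r-2) pairs (e, f) with x1 in e, x2 in f and v in e \<inter> f. At most n^(2r-2) of all
these pairs meet in a second vertex; the others are distinct (x1, x2)-paths of length two.\<close>

definition codeg_avoiding :: "'a set set \<Rightarrow> 'a \<Rightarrow> 'a \<Rightarrow> 'a \<Rightarrow> nat" where
  "codeg_avoiding E x v y = card {e\<in>E. x \<in> e \<and> v \<in> e \<and> y \<notin> e}"

definition heavy_vertices :: "'a set \<Rightarrow> 'a set set \<Rightarrow> real \<Rightarrow> 'a \<Rightarrow> 'a \<Rightarrow> 'a set" where
  "heavy_vertices V E t x y = {v \<in> V - {x, y}. t \<le> real (codeg_avoiding E x v y)}"

definition link_pairs :: "'a set set \<Rightarrow> 'a \<Rightarrow> 'a \<Rightarrow> 'a \<Rightarrow> ('a set \<times> 'a set) set" where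
  "link_pairs E x1 x2 v =
     {e\<in>E. x1 \<in> e \<and> v \<in> e \<and> x2 \<notin> e} \<times> {f\<in>E. x2 \<in> f \<and> v \<in> f \<and> x1 \<notin> f}"

lemma card_link_pairs:
  "card (link_pairs E x1 x2 v) = codeg_avoiding E x1 v x2 * codeg_avoiding E x2 v x1"
  by (simp add: link_pairs_def codeg_avoiding_def card_cartesian_product)

lemma kgraph_finite_edges:
  assumes "kgraph k V E"
  shows "finite E"
proof (rule finite_subset)
  show "E \<subseteq> Pow V" using assms by (auto simp: kgraph_def)
  show "finite (Pow V)" using assms by (simp add: kgraph_def)
qed

lemma min_vdeg_le_vdeg:
  assumes "finite V" "x \<in> V"
  shows "min_vdeg V E \<le> vdeg E x"
  using assms by (simp add: min_vdeg_def)

lemma kgraph_card_edges_containing_le: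
  assumes kg: "kgraph k V E" and T: "T \<subseteq> V"
  shows "card {e\<in>E. T \<subseteq> e} \<le> card V ^ (k - card T)"
proof -
  have fV: "finite V" using kg by (simp add: kgraph_def)
  then have "finite T" using T finite_subset by blast
  have "card {e\<in>E. T \<subseteq> e} \<le> card {S. S \<subseteq> V \<and> card S = k - card T}"
  proof (rule card_inj_on_le)
    show "inj_on (\<lambda>e. e - T) {e\<in>E. T \<subseteq> e}"
      by (rule inj_onI) auto
    show "(\<lambda>e. e - T) ` {e\<in>E. T \<subseteq> e} \<subseteq> {S. S \<subseteq> V \<and> card S = k - card T}"
      using kg \<open>finite T\<close> by (auto simp: kgraph_def card_Diff_subset)
    show "finite {S. S \<subseteq> V \<and> card S = k - card T}"
      using fV by simp
  qed
  also have "\<dots> = card V choose (k - card T)"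
    using fV by (simp add: n_subsets)
  also have "\<dots> \<le> card V ^ (k - card T)"
    by (cases "k - card T \<le> card V") (simp_all add: binomial_le_pow binomial_eq_0)
  finally show ?thesis .
qed

lemma vdeg_le_card_edges_avoiding:
  assumes kg: "kgraph (Suc r) V E" and "x \<in> V" "y \<in> V" "x \<noteq> y"
  shows "vdeg E x \<le> card {e\<in>E. x \<in> e \<and> y \<notin> e} + card V ^ (r - 1)"
proof -
  have "vdeg E x = card ({e\<in>E. x \<in> e \<and> y \<notin> e} \<union> {e\<in>E. {x, y} \<subseteq> e})"
    unfolding vdeg_def by (rule arg_cong[where f = card]) auto
  also have "\<dots> \<le> card {e\<in>E. x \<in> e \<and> y \<notin> e} + card {e\<in>E. {x, y} \<subseteq> e}"
    by (rule card_Un_le)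
  finally have "vdeg E x \<le> card {e\<in>E. x \<in> e \<and> y \<notin> e} + card {e\<in>E. {x, y} \<subseteq> e}" .
  moreover have "card {e\<in>E. {x, y} \<subseteq> e} \<le> card V ^ (r - 1)"
    using kgraph_card_edges_containing_le[OF kg, of "{x, y}"] assms by simp
  ultimately show ?thesis by linarith
qed

lemma card_edges_avoiding_le:
  assumes kg: "kgraph (Suc r) V E" and P: "P \<subseteq> V - {x, y}"
  shows "card {e\<in>E. x \<in> e \<and> y \<notin> e}
           \<le> (card P choose r) + (\<Sum>v\<in>V - {x, y} - P. codeg_avoiding E x v y)"
proof -
  define A where "A = {e\<in>E. x \<in> e \<and> y \<notin> e \<and> e - {x} \<subseteq> P}"
  have fV: "finite V" using kg by (simp add: kgraph_def)
  have fP: "finite P" using P fV by (auto intro: finite_subset)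
  have "card A \<le> card {S. S \<subseteq> P \<and> card S = r}"
  proof (rule card_inj_on_le)
    show "inj_on (\<lambda>e. e - {x}) A"
      by (rule inj_onI) (auto simp: A_def)
    show "(\<lambda>e. e - {x}) ` A \<subseteq> {S. S \<subseteq> P \<and> card S = r}"
      using kg by (auto simp: A_def kgraph_def)
    show "finite {S. S \<subseteq> P \<and> card S = r}"
      using fP by simp
  qed
  then have A_le: "card A \<le> card P choose r"
    using fP by (simp add: n_subsets)
  have "{e\<in>E. x \<in> e \<and> y \<notin> e} \<subseteq> A \<union> (\<Union>v\<in>V - {x, y} - P. {e\<in>E. x \<in> e \<and> v \<in> e \<and> y \<notin> e})"
    using kg by (auto simp: A_def kgraph_def)
  then have "card {e\<in>E. x \<in> e \<and> y \<notin> e}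
      \<le> card (A \<union> (\<Union>v\<in>V - {x, y} - P. {e\<in>E. x \<in> e \<and> v \<in> e \<and> y \<notin> e}))"
    using kgraph_finite_edges[OF kg] fV by (intro card_mono) (auto simp: A_def)
  also have "\<dots> \<le> card A + card (\<Union>v\<in>V - {x, y} - P. {e\<in>E. x \<in> e \<and> v \<in> e \<and> y \<notin> e})"
    by (rule card_Un_le)
  also have "\<dots> \<le> card A + (\<Sum>v\<in>V - {x, y} - P. codeg_avoiding E x v y)"
    unfolding codeg_avoiding_def using fV by (simp add: card_UN_le)
  also have "\<dots> \<le> (card P choose r) + (\<Sum>v\<in>V - {x, y} - P. codeg_avoiding E x v y)"
    using A_le by (rule add_right_mono)
  finally show ?thesis .
qed

lemma fact_mult_choose_ge:
  assumes "r \<le> N + 1"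
  shows "(real N - real r + 1) ^ r \<le> fact r * real (N choose r)"
proof -
  have "(\<Prod>i = 0..<r. real N - real r + 1) \<le> (\<Prod>i = 0..<r. real N - real i)"
    using assms by (intro prod_mono) auto
  also have "\<dots> = fact r * real (N choose r)"
    by (simp add: binomial_gbinomial gbinomial_mult_fact)
  finally show ?thesis by simp
qed

lemma fact_mult_choose_pred_ge:
  assumes "1 \<le> r" "r \<le> n"
  shows "real n ^ r - real r ^ 2 * real n ^ (r - 1) \<le> fact r * real ((n - 1) choose r)"
proof -
  have n: "real n > 0" using assms by simp
  have "real n ^ r - real r ^ 2 * real n ^ (r - 1) = real n ^ r * (1 + real r * (- real r / real n))"
    using n assms power_minus_mult[of r "real n"]
    by (simp add: right_diff_distrib power2_eq_square field_simps)
  also have "\<dots> \<le> real n ^ r * (1 + (- real r / real n)) ^ r"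
    using assms n by (intro mult_left_mono Bernoulli_inequality) (simp_all add: field_simps)
  also have "\<dots> = (real (n - 1) - real r + 1) ^ r"
    using n assms by (simp add: power_mult_distrib[symmetric] field_simps)
  also have "\<dots> \<le> fact r * real ((n - 1) choose r)"
    using assms by (intro fact_mult_choose_ge) simp
  finally show ?thesis .
qed

lemma fact_mult_card_edges_avoiding_le:
  assumes kg: "kgraph (Suc r) V E" and "0 \<le> t"
  shows "fact r * real (card {e\<in>E. x \<in> e \<and> y \<notin> e})
           \<le> real (card (heavy_vertices V E t x y)) ^ r + fact r * (real (card V) * t)"
proof -
  define H where "H = heavy_vertices V E t x y"
  have fV: "finite V" using kg by (simp add: kgraph_def)
  have "card {e\<in>E. x \<in> e \<and> y \<notin> e}
      \<le> (card H choose r) + (\<Sum>v\<in>V - {x, y} - H. codeg_avoiding E x v y)"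
    by (rule card_edges_avoiding_le[OF kg]) (auto simp: H_def heavy_vertices_def)
  then have "real (card {e\<in>E. x \<in> e \<and> y \<notin> e})
      \<le> real (card H choose r) + (\<Sum>v\<in>V - {x, y} - H. real (codeg_avoiding E x v y))"
    by (simp flip: of_nat_sum of_nat_add)
  also have "(\<Sum>v\<in>V - {x, y} - H. real (codeg_avoiding E x v y)) \<le> (\<Sum>v\<in>V - {x, y} - H. t)"
    by (rule sum_mono) (auto simp: H_def heavy_vertices_def)
  also have "\<dots> \<le> real (card V) * t"
    unfolding sum_constant using fV \<open>0 \<le> t\<close>
    by (intro mult_right_mono) (simp_all add: card_mono Diff_subset[THEN subset_trans])
  finally have "real (card {e\<in>E. x \<in> e \<and> y \<notin> e}) \<le> real (card H choose r) + real (card V) * t"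
    by simp
  then have "fact r * real (card {e\<in>E. x \<in> e \<and> y \<notin> e})
      \<le> fact r * (real (card H choose r) + real (card V) * t)"
    by (rule mult_left_mono) simp
  then have "fact r * real (card {e\<in>E. x \<in> e \<and> y \<notin> e})
      \<le> fact r * real (card H choose r) + fact r * (real (card V) * t)"
    by (simp only: distrib_left)
  moreover have "fact r * real (card H choose r) \<le> real (card H) ^ r"
    using binomial_fact_pow[of "card H" r] of_nat_mono by (fastforce simp: mult.commute)
  ultimately show ?thesis by (simp add: H_def)
qed

lemma power_half_add_le:
  fixes \<gamma> :: real
  assumes "0 \<le> \<gamma>" "\<gamma> \<le> 1/2"
  shows "(1/2 + \<gamma>) ^ r \<le> (1/2) ^ r + real r * \<gamma>"
  using assms norm_power_diff[of "1/2 + \<gamma>" "1/2 :: real" r] by (simp add: abs_le_iff)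

lemma fact_mult_card_edges_avoiding_ge:
  fixes c :: real
  assumes kg: "kgraph (Suc r) V E" and r: "1 \<le> r" and xy: "x \<in> V" "y \<in> V" "x \<noteq> y"
    and n: "card V = n" "r \<le> n" and "0 \<le> c"
    and deg: "c * real ((n - 1) choose r) \<le> real (vdeg E x)"
  shows "c * (real n ^ r - real r ^ 2 * real n ^ (r - 1)) - fact r * real n ^ (r - 1)
           \<le> fact r * real (card {e\<in>E. x \<in> e \<and> y \<notin> e})"
proof -
  have "c * (real n ^ r - real r ^ 2 * real n ^ (r - 1)) \<le> c * (fact r * real ((n - 1) choose r))"
    using fact_mult_choose_pred_ge[OF r n(2)] \<open>0 \<le> c\<close> by (rule mult_left_mono)
  also have "\<dots> \<le> fact r * real (vdeg E x)"
    using mult_left_mono[OF deg fact_ge_zero[of r]] by (simp add: mult.left_commute)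
  also have "\<dots> \<le> fact r * (real (card {e\<in>E. x \<in> e \<and> y \<notin> e}) + real n ^ (r - 1))"
    using vdeg_le_card_edges_avoiding[OF kg xy] n(1)
    by (intro mult_left_mono) (simp_all flip: of_nat_add of_nat_power)
  finally show ?thesis
    by (simp add: distrib_left)
qed

lemma card_heavy_vertices_power_ge:
  fixes \<epsilon> \<eta> :: real
  assumes kg: "kgraph (Suc r) V E" and r: "1 \<le> r"
    and xy: "x \<in> V" "y \<in> V" "x \<noteq> y" and n: "card V = n"
    and \<epsilon>: "0 < \<epsilon>" "\<epsilon> \<le> 1/2"
    and deg: "((1/2) ^ r + \<epsilon>) * real ((n - 1) choose r) \<le> real (vdeg E x)"
    and n_large: "4 * (real r ^ 2 + fact r) \<le> \<epsilon> * real n"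
    and \<eta>: "0 \<le> \<eta>" "fact r * \<eta> \<le> \<epsilon> / 4"
  shows "((1/2) ^ r + \<epsilon> / 2) * real n ^ r
           \<le> real (card (heavy_vertices V E (\<eta> * real n ^ (r - 1)) x y)) ^ r"
proof -
  define N where "N = real n"
  define Y where "Y = N ^ (r - 1)"
  define P where "P = real (card (heavy_vertices V E (\<eta> * Y) x y)) ^ r"
  define L where "L = real (card {e\<in>E. x \<in> e \<and> y \<notin> e})"
  define a where "a = (1/2 :: real) ^ r"
  have NY: "N ^ r = N * Y"
    using r power_minus_mult[of r N] by (simp add: Y_def mult.commute)
  have "real r * 1 \<le> real r * real r"
    using r by (intro mult_left_mono) simp_all
  then have "4 * real r \<le> 4 * (real r ^ 2 + fact r)"
    by (simp add: power2_eq_square) (use fact_ge_zero[of r, where 'a = real] in linarith)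
  also have "\<dots> \<le> N"
    using n_large \<epsilon> mult_right_mono[of \<epsilon> 1 N] by (simp add: N_def)
  finally have "r \<le> n" and N: "0 < N"
    using r by (simp_all add: N_def)
  have Y: "0 < Y" using N by (simp add: Y_def)
  have "a \<le> 1/2"
    using r power_decreasing[of 1 r "1/2 :: real"] by (simp add: a_def)
  have lower: "(a + \<epsilon>) * (N * Y - real r ^ 2 * Y) - fact r * Y \<le> fact r * L"
    using fact_mult_card_edges_avoiding_ge[OF kg r xy n \<open>r \<le> n\<close> _ deg] \<epsilon> NY
    by (simp add: L_def N_def Y_def a_def)
  have "fact r * L \<le> P + fact r * \<eta> * (N * Y)"
    using fact_mult_card_edges_avoiding_le[OF kg, of "\<eta> * Y" x y] \<eta> Y n
    by (simp add: L_def P_def N_def mult_ac)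
  also have "\<dots> \<le> P + \<epsilon> / 4 * (N * Y)"
    using \<eta> N Y by (simp add: mult_right_mono)
  finally have upper: "fact r * L \<le> P + \<epsilon> / 4 * (N * Y)" .
  have "(a + \<epsilon> / 2) * (N * Y) \<le> (a + \<epsilon>) * (N * Y) - (real r ^ 2 + fact r) * Y - \<epsilon> / 4 * (N * Y)"
    using mult_right_mono[OF n_large, of Y] Y by (simp add: N_def algebra_simps)
  also have "\<dots> \<le> (a + \<epsilon>) * (N * Y - real r ^ 2 * Y) - fact r * Y - \<epsilon> / 4 * (N * Y)"
    using mult_left_le_one_le[of "real r ^ 2 * Y" "a + \<epsilon>"] \<open>a \<le> 1/2\<close> \<epsilon> Y
    by (simp add: a_def algebra_simps)
  also have "\<dots> \<le> P"
    using lower upper by linarith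
  finally have "(a + \<epsilon> / 2) * N ^ r \<le> P"
    by (simp only: NY)
  then show ?thesis
    by (simp add: P_def a_def N_def Y_def)
qed

lemma card_heavy_vertices_gt:
  fixes \<epsilon> \<eta> :: real
  assumes kg: "kgraph (Suc r) V E" and r: "1 \<le> r"
    and xy: "x \<in> V" "y \<in> V" "x \<noteq> y" and n: "card V = n"
    and \<epsilon>: "0 < \<epsilon>" "\<epsilon> \<le> 1/2"
    and deg: "((1/2) ^ r + \<epsilon>) * real ((n - 1) choose r) \<le> real (vdeg E x)"
    and n_large: "4 * (real r ^ 2 + fact r) \<le> \<epsilon> * real n"
    and \<eta>: "0 \<le> \<eta>" "fact r * \<eta> \<le> \<epsilon> / 4"
  shows "(1/2 + \<epsilon> / (4 * real r)) * real n
           < real (card (heavy_vertices V E (\<eta> * real n ^ (r - 1)) x y))"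
proof -
  have "0 < real n"
    using xy(1) n kg by (auto simp: kgraph_def card_gt_0_iff)
  have "(1/2 + \<epsilon> / (4 * real r)) ^ r \<le> (1/2) ^ r + \<epsilon> / 4"
    using power_half_add_le[of "\<epsilon> / (4 * real r)" r] \<epsilon> r by (simp add: field_simps)
  then have "((1/2 + \<epsilon> / (4 * real r)) * real n) ^ r \<le> ((1/2) ^ r + \<epsilon> / 4) * real n ^ r"
    by (simp add: power_mult_distrib mult_right_mono)
  also have "\<dots> < ((1/2) ^ r + \<epsilon> / 2) * real n ^ r"
    using \<open>0 < real n\<close> \<epsilon> by (intro mult_strict_right_mono) simp_all
  also have "\<dots> \<le> real (card (heavy_vertices V E (\<eta> * real n ^ (r - 1)) x y)) ^ r"
    by (rule card_heavy_vertices_power_ge[OF assms])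
  finally show ?thesis
    by (rule power_less_imp_less_base) simp
qed

lemma sum_card_link_pairs_meeting_once_le_paths2:
  assumes "finite E" "finite S"
  shows "(\<Sum>v\<in>S. card {(e, f) \<in> link_pairs E x1 x2 v. e \<inter> f = {v}}) \<le> card (paths2 E x1 x2)"
proof -
  define G where "G v = {(e, f) \<in> link_pairs E x1 x2 v. e \<inter> f = {v}}" for v
  have "finite (G v)" for v
    using assms(1) by (auto simp: G_def link_pairs_def intro: finite_subset[of _ "E \<times> E"])
  then have "(\<Sum>v\<in>S. card (G v)) = card (\<Union>v\<in>S. G v)"
    by (intro card_UN_disjoint[symmetric]) (auto simp: G_def assms(2))
  also have "\<dots> \<le> card (paths2 E x1 x2)"
  proof (rule card_inj_on_le)
    \<comment> \<open>only \<open>e\<close> contains \<open>x1\<close>, so \<open>{e, f}\<close> determines the pair \<open>(e, f)\<close>\<close>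
    show "inj_on (\<lambda>(e, f). {e, f}) (\<Union>v\<in>S. G v)"
      by (auto simp: inj_on_def G_def link_pairs_def doubleton_eq_iff)
    show "(\<lambda>(e, f). {e, f}) ` (\<Union>v\<in>S. G v) \<subseteq> paths2 E x1 x2"
      by (auto simp: G_def link_pairs_def paths2_def)
    show "finite (paths2 E x1 x2)"
      using assms(1) by (auto simp: paths2_def intro: finite_subset[of _ "Pow E"])
  qed
  finally show ?thesis by (simp add: G_def)
qed

lemma link_pairs_second_common_vertex:
  assumes "kgraph k V E" "(e, f) \<in> link_pairs E x1 x2 v" "e \<inter> f \<noteq> {v}"
  obtains u where "u \<in> V - {x1, x2, v}" "{x1, v, u} \<subseteq> e" "{x2, v, u} \<subseteq> f"
proof -
  have "v \<in> e \<inter> f"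
    using assms(2) by (simp add: link_pairs_def)
  with assms(3) obtain u where "u \<in> e" "u \<in> f" "u \<noteq> v"
    by blast
  with assms that show ?thesis
    by (auto simp: link_pairs_def kgraph_def)
qed

lemma card_link_pairs_meeting_twice_le:
  assumes kg: "kgraph (Suc r) V E" and x: "x1 \<in> V" "x2 \<in> V" and v: "v \<in> V - {x1, x2}"
  shows "card {(e, f) \<in> link_pairs E x1 x2 v. e \<inter> f \<noteq> {v}} \<le> card V * card V ^ (2 * r - 4)"
proof -
  define U where "U = V - {x1, x2, v}"
  define S where "S z u = {e\<in>E. {z, v, u} \<subseteq> e}" for z u
  have fV: "finite V" using kg by (simp add: kgraph_def)
  have card_S: "card (S z u) \<le> card V ^ (r - 2)" if "z \<in> {x1, x2}" "u \<in> U" for z u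
  proof -
    have "card {z, v, u} = 3" using that v by (auto simp: U_def)
    then show ?thesis
      using kgraph_card_edges_containing_le[OF kg, of "{z, v, u}"] that x v
      by (auto simp: S_def U_def numeral_3_eq_3 numeral_2_eq_2)
  qed
  have "{(e, f) \<in> link_pairs E x1 x2 v. e \<inter> f \<noteq> {v}} \<subseteq> (\<Union>u\<in>U. S x1 u \<times> S x2 u)"
    using link_pairs_second_common_vertex[OF kg] by (fastforce simp: U_def S_def link_pairs_def)
  then have "card {(e, f) \<in> link_pairs E x1 x2 v. e \<inter> f \<noteq> {v}} \<le> card (\<Union>u\<in>U. S x1 u \<times> S x2 u)"
    using fV kgraph_finite_edges[OF kg] by (intro card_mono) (simp_all add: U_def S_def)
  also have "\<dots> \<le> (\<Sum>u\<in>U. card (S x1 u) * card (S x2 u))"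
    using card_UN_le[of U "\<lambda>u. S x1 u \<times> S x2 u"] fV by (simp add: U_def card_cartesian_product)
  also have "\<dots> \<le> (\<Sum>u\<in>U. card V ^ (r - 2) * card V ^ (r - 2))"
    using card_S by (intro sum_mono mult_mono) auto
  also have "\<dots> = card U * card V ^ (r - 2 + (r - 2))"
    by (simp add: power_add)
  also have "r - 2 + (r - 2) = 2 * r - 4"
    by simp
  also have "card U * card V ^ (2 * r - 4) \<le> card V * card V ^ (2 * r - 4)"
    using fV by (intro mult_le_mono1 card_mono) (auto simp: U_def)
  finally show ?thesis .
qed

lemma link_pairs_meeting_twice_empty_if_graph:
  assumes kg: "kgraph 2 V E"
  shows "{(e, f) \<in> link_pairs E x1 x2 v. e \<inter> f \<noteq> {v}} = {}"
proof (rule ccontr)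
  assume "{(e, f) \<in> link_pairs E x1 x2 v. e \<inter> f \<noteq> {v}} \<noteq> {}"
  then obtain e f where ef: "(e, f) \<in> link_pairs E x1 x2 v" "e \<inter> f \<noteq> {v}"
    by auto
  then obtain u where u: "u \<in> V - {x1, x2, v}" and "{x1, v, u} \<subseteq> e" "{x2, v, u} \<subseteq> f"
    by (rule link_pairs_second_common_vertex[OF kg])
  moreover have "e \<in> E" "v \<noteq> x1"
    using ef by (auto simp: link_pairs_def)
  ultimately have "card {x1, v, u} \<le> 2"
    using kg card_mono[of e "{x1, v, u}"] by (auto simp: kgraph_def intro: finite_subset)
  with u \<open>v \<noteq> x1\<close> show False
    by auto
qed

lemma sum_card_link_pairs_meeting_twice_le:
  assumes kg: "kgraph (Suc r) V E" and r: "1 \<le> r" and x: "x1 \<in> V" "x2 \<in> V"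
  shows "(\<Sum>v\<in>V - {x1, x2}. card {(e, f) \<in> link_pairs E x1 x2 v. e \<inter> f \<noteq> {v}})
           \<le> card V ^ (2 * r - 2)"
proof (cases "r = 1")
  case True
  \<comment> \<open>The per-vertex bound \<open>card V * card V ^ (2 * r - 4)\<close> is \<open>card V\<close> here because of
    truncated subtraction, so the emptiness of the sets is needed.\<close>
  with kg have "kgraph 2 V E"
    by (simp add: numeral_2_eq_2)
  then have "(\<Sum>v\<in>V - {x1, x2}. card {(e, f) \<in> link_pairs E x1 x2 v. e \<inter> f \<noteq> {v}}) = 0"
    by (simp only: link_pairs_meeting_twice_empty_if_graph card.empty sum.neutral_const)
  then show ?thesis
    by simp
next
  case False
  have fV: "finite V" using kg by (simp add: kgraph_def)
  have "(\<Sum>v\<in>V - {x1, x2}. card {(e, f) \<in> link_pairs E x1 x2 v. e \<inter> f \<noteq> {v}})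
      \<le> (\<Sum>v\<in>V - {x1, x2}. card V * card V ^ (2 * r - 4))"
    using card_link_pairs_meeting_twice_le[OF kg x] by (intro sum_mono) simp
  also have "\<dots> = card (V - {x1, x2}) * (card V * card V ^ (2 * r - 4))"
    by simp
  also have "\<dots> \<le> card V * (card V * card V ^ (2 * r - 4))"
    using fV by (intro mult_right_mono card_mono) auto
  also have "\<dots> = card V ^ Suc (Suc (2 * r - 4))"
    by simp
  also have "Suc (Suc (2 * r - 4)) = 2 * r - 2"
    using False r by simp
  finally show ?thesis .
qed

lemma sum_codeg_products_le:
  assumes kg: "kgraph (Suc r) V E" and r: "1 \<le> r" and x: "x1 \<in> V" "x2 \<in> V"
  shows "(\<Sum>v\<in>V - {x1, x2}. codeg_avoiding E x1 v x2 * codeg_avoiding E x2 v x1)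
           \<le> card (paths2 E x1 x2) + card V ^ (2 * r - 2)"
proof -
  have fV: "finite V" using kg by (simp add: kgraph_def)
  have "codeg_avoiding E x1 v x2 * codeg_avoiding E x2 v x1
      \<le> card {(e, f) \<in> link_pairs E x1 x2 v. e \<inter> f = {v}}
        + card {(e, f) \<in> link_pairs E x1 x2 v. e \<inter> f \<noteq> {v}}" for v
  proof -
    have "card (link_pairs E x1 x2 v) = card ({(e, f) \<in> link_pairs E x1 x2 v. e \<inter> f = {v}}
                                \<union> {(e, f) \<in> link_pairs E x1 x2 v. e \<inter> f \<noteq> {v}})"
      by (rule arg_cong[where f = card]) auto
    also have "\<dots> \<le> card {(e, f) \<in> link_pairs E x1 x2 v. e \<inter> f = {v}}
                    + card {(e, f) \<in> link_pairs E x1 x2 v. e \<inter> f \<noteq> {v}}"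
      by (rule card_Un_le)
    finally show ?thesis
      by (simp only: card_link_pairs)
  qed
  then have "(\<Sum>v\<in>V - {x1, x2}. codeg_avoiding E x1 v x2 * codeg_avoiding E x2 v x1)
      \<le> (\<Sum>v\<in>V - {x1, x2}. card {(e, f) \<in> link_pairs E x1 x2 v. e \<inter> f = {v}})
        + (\<Sum>v\<in>V - {x1, x2}. card {(e, f) \<in> link_pairs E x1 x2 v. e \<inter> f \<noteq> {v}})"
    by (simp add: sum_mono flip: sum.distrib)
  also have "\<dots> \<le> card (paths2 E x1 x2) + card V ^ (2 * r - 2)"
    using sum_card_link_pairs_meeting_once_le_paths2[OF kgraph_finite_edges[OF kg]]
          sum_card_link_pairs_meeting_twice_le[OF kg r x] fV
    by (intro add_mono) simp_all
  finally show ?thesis .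
qed

lemma card_Int_gt:
  fixes \<gamma> m :: real
  assumes "finite W" "A \<subseteq> W" "B \<subseteq> W" "real (card W) \<le> m"
    and "(1/2 + \<gamma>) * m < real (card A)" "(1/2 + \<gamma>) * m < real (card B)"
  shows "2 * \<gamma> * m < real (card (A \<inter> B))"
proof -
  have "card A + card B = card (A \<union> B) + card (A \<inter> B)"
    using assms(1-3) by (intro card_Un_Int) (simp_all add: finite_subset)
  moreover have "card (A \<union> B) \<le> card W"
    using assms(1-3) by (intro card_mono) simp_all
  ultimately have "real (card A) + real (card B) \<le> real (card W) + real (card (A \<inter> B))"
    by (simp flip: of_nat_add)
  then show ?thesis
    using assms(4-6) distrib_right[of "1/2" \<gamma> m] by linarith
qed

lemma card_heavy_mult_le_sum_codeg_products:
  assumes "finite V" and "0 \<le> t"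
  shows "real (card (heavy_vertices V E t x1 x2 \<inter> heavy_vertices V E t x2 x1)) * (t * t)
           \<le> (\<Sum>v\<in>V - {x1, x2}. real (codeg_avoiding E x1 v x2 * codeg_avoiding E x2 v x1))"
proof -
  define H where "H = heavy_vertices V E t x1 x2 \<inter> heavy_vertices V E t x2 x1"
  have "real (card H) * (t * t) = (\<Sum>v\<in>H. t * t)"
    by simp
  also have "\<dots> \<le> (\<Sum>v\<in>H. real (codeg_avoiding E x1 v x2 * codeg_avoiding E x2 v x1))"
  proof (rule sum_mono)
    fix v assume "v \<in> H"
    then have "t \<le> real (codeg_avoiding E x1 v x2)" "t \<le> real (codeg_avoiding E x2 v x1)"
      by (auto simp: H_def heavy_vertices_def)
    with \<open>0 \<le> t\<close> show "t * t \<le> real (codeg_avoiding E x1 v x2 * codeg_avoiding E x2 v x1)"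
      by (simp add: mult_mono)
  qed
  also have "\<dots> \<le> (\<Sum>v\<in>V - {x1, x2}. real (codeg_avoiding E x1 v x2 * codeg_avoiding E x2 v x1))"
    using \<open>finite V\<close> by (intro sum_mono2) (auto simp: H_def heavy_vertices_def)
  finally show ?thesis by (simp add: H_def)
qed

lemma card_paths2_ge_heavy:
  fixes \<eta> \<gamma> :: real
  assumes kg: "kgraph (Suc r) V E" and r: "1 \<le> r" and x: "x1 \<in> V" "x2 \<in> V"
    and n: "card V = n" and "0 \<le> \<eta>"
    and heavy1: "(1/2 + \<gamma>) * real n < real (card (heavy_vertices V E (\<eta> * real n ^ (r - 1)) x1 x2))"
    and heavy2: "(1/2 + \<gamma>) * real n < real (card (heavy_vertices V E (\<eta> * real n ^ (r - 1)) x2 x1))"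
    and n_large: "1 \<le> \<gamma> * \<eta> ^ 2 * real n"
  shows "\<gamma> * \<eta> ^ 2 * real n ^ (2 * r - 1) \<le> real (card (paths2 E x1 x2))"
proof -
  define t where "t = \<eta> * real n ^ (r - 1)"
  define X where "X = real n ^ (2 * r - 2)"
  have fV: "finite V" using kg by (simp add: kgraph_def)
  have "t * t = \<eta> ^ 2 * real n ^ (r - 1 + (r - 1))"
    by (simp add: t_def power2_eq_square power_add)
  also have "r - 1 + (r - 1) = 2 * r - 2"
    using r by simp
  finally have t: "t * t = \<eta> ^ 2 * X"
    by (simp add: X_def)
  have "2 * \<gamma> * real n < real (card (heavy_vertices V E t x1 x2 \<inter> heavy_vertices V E t x2 x1))"
    using heavy1 heavy2 fV n
    by (intro card_Int_gt[of "V - {x1, x2}"]) (auto simp: t_def heavy_vertices_def card_mono)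
  then have "2 * \<gamma> * real n * (\<eta> ^ 2 * X)
      \<le> real (card (heavy_vertices V E t x1 x2 \<inter> heavy_vertices V E t x2 x1)) * (t * t)"
    unfolding t by (intro mult_right_mono) (simp_all add: X_def)
  also have "\<dots> \<le> (\<Sum>v\<in>V - {x1, x2}. real (codeg_avoiding E x1 v x2 * codeg_avoiding E x2 v x1))"
    using fV \<open>0 \<le> \<eta>\<close> by (intro card_heavy_mult_le_sum_codeg_products) (simp_all add: t_def)
  also have "\<dots> \<le> real (card (paths2 E x1 x2)) + X"
    using of_nat_mono[OF sum_codeg_products_le[OF kg r x]] n
    by (simp only: of_nat_sum of_nat_add of_nat_power X_def)
  finally have "2 * \<gamma> * real n * (\<eta> ^ 2 * X) - X \<le> real (card (paths2 E x1 x2))"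
    by simp
  moreover have "X \<le> \<gamma> * \<eta> ^ 2 * real n * X"
    using mult_right_mono[OF n_large, of X] by (simp add: X_def)
  moreover have "real n ^ (2 * r - 1) = real n * X"
    using r power_minus_mult[of "2 * r - 1" "real n"] by (simp add: X_def mult.commute numeral_2_eq_2)
  ultimately show ?thesis
    by (simp add: algebra_simps)
qed

text \<open>The density is \<open>\<gamma> \<eta>\<^sup>2\<close>, where \<open>\<eta> = \<epsilon> / (4 r!)\<close> is the heaviness threshold and
  \<open>\<gamma> = \<epsilon> / (4 r)\<close> the excess of the proportion of heavy vertices over \<open>1/2\<close>.\<close>

definition path_density :: "nat \<Rightarrow> real \<Rightarrow> real" where
  "path_density r \<epsilon> = \<epsilon> / (4 * real r) * (\<epsilon> / (4 * fact r)) ^ 2"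

definition path_threshold :: "nat \<Rightarrow> real \<Rightarrow> nat" where
  "path_threshold r \<epsilon> = nat \<lceil>max (4 * (real r ^ 2 + fact r) / \<epsilon>) (1 / path_density r \<epsilon>)\<rceil>"

lemma path_density_pos: "0 < \<epsilon> \<Longrightarrow> 1 \<le> r \<Longrightarrow> 0 < path_density r \<epsilon>"
  by (simp add: path_density_def)

lemma card_paths2_ge:
  fixes \<epsilon> :: real
  assumes kg: "kgraph (Suc r) V E" and r: "1 \<le> r" and n: "card V = n"
    and \<epsilon>: "0 < \<epsilon>" "\<epsilon> \<le> 1/2"
    and deg: "((1/2) ^ r + \<epsilon>) * real ((n - 1) choose r) \<le> real (min_vdeg V E)"
    and n_large: "path_threshold r \<epsilon> \<le> n"
    and x: "x1 \<in> V" "x2 \<in> V" "x1 \<noteq> x2"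
  shows "path_density r \<epsilon> * real n ^ (2 * r - 1) \<le> real (card (paths2 E x1 x2))"
proof -
  have "0 < path_density r \<epsilon>"
    using \<epsilon>(1) r by (rule path_density_pos)
  moreover have "max (4 * (real r ^ 2 + fact r) / \<epsilon>) (1 / path_density r \<epsilon>) \<le> real n"
    using n_large real_nat_ceiling_ge[of "max (4 * (real r ^ 2 + fact r) / \<epsilon>) (1 / path_density r \<epsilon>)"]
    unfolding path_threshold_def by linarith
  ultimately have n_large: "4 * (real r ^ 2 + fact r) \<le> \<epsilon> * real n" "1 \<le> path_density r \<epsilon> * real n"
    using \<epsilon> by (simp_all add: field_simps)
  have \<eta>: "0 \<le> \<epsilon> / (4 * fact r)" "fact r * (\<epsilon> / (4 * fact r)) \<le> \<epsilon> / 4"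
    using \<epsilon> by simp_all
  have "((1/2) ^ r + \<epsilon>) * real ((n - 1) choose r) \<le> real (vdeg E x)" if "x \<in> V" for x
    using deg min_vdeg_le_vdeg[of V x E] kg that by (force simp: kgraph_def)
  then show ?thesis
    using card_heavy_vertices_gt[OF kg r x n \<epsilon> _ n_large(1) \<eta>]
      card_heavy_vertices_gt[OF kg r x(2,1) _ n \<epsilon> _ n_large(1) \<eta>] x n_large(2)
    unfolding path_density_def by (intro card_paths2_ge_heavy[OF kg r x(1,2) n \<eta>(1)]) auto
qed

theorem lemma4p8:
  "\<forall>k::nat. k \<ge> 2 \<longrightarrow> (\<forall>\<epsilon>::real. \<epsilon> > 0 \<longrightarrow>
     (\<exists>\<delta>::real. \<delta> > 0 \<and> (\<exists>n0::nat. \<forall>n\<ge>n0. \<forall>(V::nat set) E.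
        kgraph k V E \<and> card V = n \<and>
        real (min_vdeg V E) \<ge> (2 powr (1 - real k) + \<epsilon>) * real ((n - 1) choose (k - 1))
        \<longrightarrow> (\<forall>x1\<in>V. \<forall>x2\<in>V. x1 \<noteq> x2 \<longrightarrow>
              real (card (paths2 E x1 x2)) \<ge> \<delta> * real n ^ (2 * k - 3)))))"
proof (intro allI impI)
  fix k :: nat and \<epsilon> :: real
  assume "2 \<le> k" "0 < \<epsilon>"
  then obtain r where k: "k = Suc r" and r: "1 \<le> r"
    by (cases k) auto
  \<comment> \<open>the counting argument needs \<open>2\<^sup>-\<^sup>r + e \<le> 1\<close>\<close>
  define e where "e = min \<epsilon> (1/2)"
  have e: "0 < e" "e \<le> 1/2" "e \<le> \<epsilon>"
    using \<open>0 < \<epsilon>\<close> by (simp_all add: e_def)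
  have powr: "2 powr (1 - real k) = (1/2 :: real) ^ r"
    using k by (simp add: powr_minus_divide powr_realpow power_one_over)
  show "\<exists>\<delta>>0. \<exists>n0. \<forall>n\<ge>n0. \<forall>(V::nat set) E. kgraph k V E \<and> card V = n \<and>
      real (min_vdeg V E) \<ge> (2 powr (1 - real k) + \<epsilon>) * real ((n - 1) choose (k - 1))
      \<longrightarrow> (\<forall>x1\<in>V. \<forall>x2\<in>V. x1 \<noteq> x2 \<longrightarrow> real (card (paths2 E x1 x2)) \<ge> \<delta> * real n ^ (2 * k - 3))"
  proof (intro exI[of _ "path_density r e"] conjI exI[of _ "path_threshold r e"] allI impI ballI)
    show "0 < path_density r e"
      using e(1) r by (rule path_density_pos)
    fix n V E x1 x2
    assume "path_threshold r e \<le> n" and H: "kgraph k V E \<and> card V = n \<and>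
        real (min_vdeg V E) \<ge> (2 powr (1 - real k) + \<epsilon>) * real ((n - 1) choose (k - 1))"
      and x: "x1 \<in> V" "x2 \<in> V" "x1 \<noteq> x2"
    then have "((1/2) ^ r + e) * real ((n - 1) choose r) \<le> real (min_vdeg V E)"
      using e(3) k powr mult_right_mono[of e \<epsilon> "real ((n - 1) choose r)"] by (simp add: distrib_right)
    then show "real (card (paths2 E x1 x2)) \<ge> path_density r e * real n ^ (2 * k - 3)"
      using card_paths2_ge[of r V E n e x1 x2] \<open>path_threshold r e \<le> n\<close> H r e x k by simp
  qed
qed

end
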